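(* Let $\mathcal A\in\mathbb Q^{n\times n\times n_3}$. Then $\mathtt{bcirc_z}(\mathcal A^k)=\mathtt{bcirc_z}(\mathcal A)^k$ for every positive integer $k$. If moreover $\mathcal A$ is invertible, then $\mathtt{bcirc_z}(\mathcal A^{-1})=\mathtt{bcirc_z}(\mathcal A)^{-1}$.
   Context: $\mathbb Q$ denotes the real quaternions $a_0+a_1\mathbf i+a_2\mathbf j+a_3\mathbf k$ with the usual Hamilton multiplication; $\mathbb C$ is identified with $\{a_0+a_1\mathbf i\}$. Every quaternion array $A=A_0+A_1\mathbf i+A_2\mathbf j+A_3\mathbf k$ (real $A_t$) is written uniquely as $A=A_{\mathbf d}+\mathbf jA_{\mathbf c}$ with $A_{\mathbf d}=A_0+A_1\mathbf i$, $A_{\mathbf c}=A_2-A_3\mathbf i$ complex. For $\mathcal A\in\mathbb Q^{n_1\times n_2\times n_3}$, $\mathcal A^{(s)}=\mathcal A(:,:,s)$. For a complex tensor $\mathcal C$, $\mathtt{bcirc}(\mathcal C)$ is the $n_1n_3\times n_2n_3$ block circulant matrix with $(p,q)$ block $\mathcal C^{(((p-q)\bmod n_3)+1)}$. $P_{n_3}$ is the permutation matrix with first row $e_1^T$ and $r$-th row $e_{n_3+2-r}^T$ for $r\ge2$. $\mathtt{bcirc_z}(\mathcal A)=\mathtt{bcirc}(\mathcal A_{\mathbf d})+\mathbf j\,\mathtt{bcirc}(\mathcal A_{\mathbf c})(P_{n_3}\otimes I_{n_2})$. $\mathtt{unfold}(\mathcal B)=[\mathcal B^{(1)};\dots;\mathcal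 B^{(n_3)}]$, $\mathtt{fold}$ its inverse. QT-product: $\mathcal A*_Q\mathcal B=\mathtt{fold}(\mathtt{bcirc_z}(\mathcal A)\,\mathtt{unfold}(\mathcal B))$. The identity tensor $\mathcal I\in\mathbb Q^{n\times n\times n_3}$ has first frontal slice $I_n$ and all other frontal slices zero. Powers: $\mathcal A^1=\mathcal A$, $\mathcal A^{k+1}=\mathcal A*_Q\mathcal A^k$. $\mathcal A$ is invertible if there is $\mathcal A^{-1}$ with $\mathcal A*_Q\mathcal A^{-1}=\mathcal A^{-1}*_Q\mathcal A=\mathcal I$. *)

theory Defs
  imports Complex_Main "Jordan_Normal_Form.Matrix"
begin

datatype quat = Quat (q0: real) (q1: real) (q2: real) (q3: real)

instantiation quat :: ring_1
begin
definition "0 = Quat 0 0 0 0"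
definition "1 = Quat 1 0 0 0"
definition "a + b = Quat (q0 a + q0 b) (q1 a + q1 b) (q2 a + q2 b) (q3 a + q3 b)"
definition "a - b = Quat (q0 a - q0 b) (q1 a - q1 b) (q2 a - q2 b) (q3 a - q3 b)"
definition "- a = Quat (- q0 a) (- q1 a) (- q2 a) (- q3 a)"
definition "a * b = Quat
   (q0 a * q0 b - q1 a * q1 b - q2 a * q2 b - q3 a * q3 b)
   (q0 a * q1 b + q1 a * q0 b + q2 a * q3 b - q3 a * q2 b)
   (q0 a * q2 b - q1 a * q3 b + q2 a * q0 b + q3 a * q1 b)
   (q0 a * q3 b + q1 a * q2 b - q2 a * q1 b + q3 a * q0 b)"
instance
  by standard (simp_all add: zero_quat_def one_quat_def plus_quat_def minus_quat_def
      uminus_quat_def times_quat_def quat.expand algebra_simps)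
end

definition quat_j :: quat where "quat_j = Quat 0 0 1 0"

definition of_cplx :: "complex \<Rightarrow> quat" where
  "of_cplx z = Quat (Re z) (Im z) 0 0"

text \<open>q = q_d + j q_c with q_d = a0 + a1 i and q_c = a2 - a3 i.\<close>
definition quat_d :: "quat \<Rightarrow> complex" where "quat_d q = Complex (q0 q) (q1 q)"
definition quat_c :: "quat \<Rightarrow> complex" where "quat_c q = Complex (q2 q) (- q3 q)"

text \<open>A tensor in K^(n1 x n2 x n3) is the list of its n3 frontal slices
  (slice s+1 of the paper is element s of the list), each an n1 x n2 matrix.\<close>
definition tensor_dim :: "nat \<Rightarrow> nat \<Rightarrow> nat \<Rightarrow> 'a mat list \<Rightarrow> bool" where
  "tensor_dim n1 n2 n3 T \<longleftrightarrow> length T = n3 \<and> (\<forall>S\<in>set T. S \<in> carrier_mat n1 n2)"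

definition tensor_d :: "quat mat list \<Rightarrow> complex mat list" where
  "tensor_d T = map (map_mat quat_d) T"
definition tensor_c :: "quat mat list \<Rightarrow> complex mat list" where
  "tensor_c T = map (map_mat quat_c) T"

definition bcirc :: "nat \<Rightarrow> nat \<Rightarrow> nat \<Rightarrow> 'a mat list \<Rightarrow> 'a mat" where
  "bcirc n1 n2 n3 C = mat (n1 * n3) (n2 * n3)
     (\<lambda>(i, j). (C ! ((i div n1 + n3 - j div n2) mod n3)) $$ (i mod n1, j mod n2))"

text \<open>Permutation matrix P: first row e_1, r-th row e_(n3+2-r) for r >= 2
  (0-indexed: row r has its 1 in column (n3 - r) mod n3).\<close>
definition perm_P :: "nat \<Rightarrow> 'a :: {zero,one} mat" where
  "perm_P n3 = mat n3 n3 (\<lambda>(r, c). if c = (n3 - r) mod n3 then 1 else 0)"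

definition kron :: "'a :: times mat \<Rightarrow> 'a mat \<Rightarrow> 'a mat" where
  "kron A B = mat (dim_row A * dim_row B) (dim_col A * dim_col B)
     (\<lambda>(i, j). A $$ (i div dim_row B, j div dim_col B) * B $$ (i mod dim_row B, j mod dim_col B))"

definition bcirc_z :: "nat \<Rightarrow> nat \<Rightarrow> nat \<Rightarrow> quat mat list \<Rightarrow> quat mat" where
  "bcirc_z n1 n2 n3 A =
     map_mat of_cplx (bcirc n1 n2 n3 (tensor_d A)) +
     quat_j \<cdot>\<^sub>m (map_mat of_cplx (bcirc n1 n2 n3 (tensor_c A)) * kron (perm_P n3) (1\<^sub>m n2))"

definition unfold_t :: "nat \<Rightarrow> nat \<Rightarrow> nat \<Rightarrow> 'a mat list \<Rightarrow> 'a mat" where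
  "unfold_t n2 n4 n3 B = mat (n2 * n3) n4 (\<lambda>(i, j). (B ! (i div n2)) $$ (i mod n2, j))"

definition fold_t :: "nat \<Rightarrow> nat \<Rightarrow> nat \<Rightarrow> 'a mat \<Rightarrow> 'a mat list" where
  "fold_t n1 n4 n3 M = map (\<lambda>s. mat n1 n4 (\<lambda>(i, j). M $$ (s * n1 + i, j))) [0..<n3]"

definition qt_prod :: "nat \<Rightarrow> nat \<Rightarrow> nat \<Rightarrow> nat \<Rightarrow> quat mat list \<Rightarrow> quat mat list \<Rightarrow> quat mat list" where
  "qt_prod n1 n2 n4 n3 A B = fold_t n1 n4 n3 (bcirc_z n1 n2 n3 A * unfold_t n2 n4 n3 B)"

definition qt_id :: "nat \<Rightarrow> nat \<Rightarrow> quat mat list" where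
  "qt_id n n3 = map (\<lambda>s. if s = 0 then 1\<^sub>m n else 0\<^sub>m n n) [0..<n3]"

text \<open>Powers: A^1 = A, A^(k+1) = A *_Q A^k (only k >= 1 is meaningful).\<close>
fun qt_pow :: "nat \<Rightarrow> nat \<Rightarrow> quat mat list \<Rightarrow> nat \<Rightarrow> quat mat list" where
  "qt_pow n n3 A 0 = qt_id n n3"
| "qt_pow n n3 A (Suc 0) = A"
| "qt_pow n n3 A (Suc (Suc k)) = qt_prod n n n n3 A (qt_pow n n3 A (Suc k))"

definition qt_is_inverse :: "nat \<Rightarrow> nat \<Rightarrow> quat mat list \<Rightarrow> quat mat list \<Rightarrow> bool" where
  "qt_is_inverse n n3 A B \<longleftrightarrow> tensor_dim n n n3 B \<and>
     qt_prod n n n n3 A B = qt_id n n3 \<and> qt_prod n n n n3 B A = qt_id n n3"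

definition qt_invertible :: "nat \<Rightarrow> nat \<Rightarrow> quat mat list \<Rightarrow> bool" where
  "qt_invertible n n3 A \<longleftrightarrow> (\<exists>B. qt_is_inverse n n3 A B)"

definition qt_inv :: "nat \<Rightarrow> nat \<Rightarrow> quat mat list \<Rightarrow> quat mat list" where
  "qt_inv n n3 A = (THE B. qt_is_inverse n n3 A B)"

end

theory Submission
  imports Defs
begin

text \<open>Write every quaternion as \<open>x = x\<^sub>d + \<j> x\<^sub>c\<close>.
  Because \<open>P\<^sub>n\<^sub>3\<close> reverses the block columns, block \<open>(p, r)\<close> of \<open>bcirc\<^sub>z A\<close> is
  \<open>(A\<^sub>p\<^sub>-\<^sub>r)\<^sub>d + \<j> (A\<^sub>p\<^sub>+\<^sub>r)\<^sub>c\<close>, slice indices taken mod \<open>n\<^sub>3\<close>. Since \<open>\<j> z = conj z \<j>\<close>,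
  products of two \<open>d\<close>-parts or two \<open>c\<close>-parts are \<open>d\<close>-parts and mixed products are
  \<open>c\<close>-parts; reindexing the block product of \<open>bcirc\<^sub>z A\<close> and \<open>bcirc\<^sub>z B\<close> by
  \<open>q \<mapsto> q \<plusminus> r\<close> then gives exactly the blocks of \<open>bcirc\<^sub>z (A *\<^sub>Q B)\<close>. So \<open>bcirc\<^sub>z\<close> is
  multiplicative and maps \<open>\<I>\<close> to the identity matrix, and powers follow by induction.
  Moreover \<open>B = B *\<^sub>Q \<I>\<close> is computed from \<open>bcirc\<^sub>z B\<close> alone, so \<open>bcirc\<^sub>z\<close> is injective;
  hence QT-inverses are unique and are mapped to matrix inverses.\<close>

lemma index_mult_mat_sum:
  assumes "i < dim_row A" "j < dim_col B" "dim_col A = dim_row B"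
  shows "(A * B) $$ (i, j) = (\<Sum>l<dim_row B. A $$ (i, l) * B $$ (l, j))"
  using assms by (simp add: scalar_prod_def atLeast0LessThan)

lemma sum_lessThan_mult_blocks:
  "(\<Sum>l<n * N. g l) = (\<Sum>q<N. \<Sum>m<n. g (q * n + m))" for g :: "nat \<Rightarrow> 'a::comm_monoid_add"
proof -
  have "sum g {q * n..<q * n + n} = (\<Sum>m<n. g (q * n + m))" for q
    using sum.shift_bounds_nat_ivl[of g 0 "q * n" n] by (simp add: atLeast0LessThan add.commute)
  then show ?thesis
    using sum.nat_group[of g n N] by (simp add: mult.commute)
qed

lemma block_index_less:
  fixes q m n N :: nat
  assumes "q < N" "m < n"
  shows "q * n + m < n * N"
proof -
  have "q * n + m < (q + 1) * n" using assms by simp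
  also have "\<dots> \<le> N * n" using assms by (intro mult_le_mono1) simp
  finally show ?thesis by (simp add: mult.commute)
qed

lemma mult_mat_unit_col_index:
  fixes M K :: "'a::semiring_1 mat"
  assumes "i < dim_row M" "j < dim_col K" "dim_col M = dim_row K" "l0 < dim_row K"
    and unit: "\<And>l. l < dim_row K \<Longrightarrow> K $$ (l, j) = (if l = l0 then 1 else 0)"
  shows "(M * K) $$ (i, j) = M $$ (i, l0)"
proof -
  have "(M * K) $$ (i, j) = (\<Sum>l<dim_row K. M $$ (i, l) * K $$ (l, j))"
    using assms(1-3) by (rule index_mult_mat_sum)
  also have "\<dots> = (\<Sum>l<dim_row K. if l = l0 then M $$ (i, l) else 0)"
    using unit by (intro sum.cong) auto
  finally show ?thesis using assms(4) by simp
qed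

lemma sum_shift_mod:
  fixes f :: "int \<Rightarrow> 'a::comm_monoid_add"
  assumes N: "0 < N" and periodic: "\<And>t. f (t mod int N) = f t"
  shows "(\<Sum>q<N. f (int q + c)) = (\<Sum>q<N. f (int q))"
proof -
  let ?h = "\<lambda>q. nat ((int q + c) mod int N)"
  have bij: "bij_betw ?h {..<N} {..<N}"
    by (rule bij_betw_byWitness[where f' = "\<lambda>q. nat ((int q - c) mod int N)"])
      (use N in \<open>auto simp: mod_simps nat_less_iff\<close>)
  have "(\<Sum>q<N. f (int q + c)) = (\<Sum>q<N. f (int (?h q)))"
    using N by (intro sum.cong) (simp_all add: periodic)
  also have "\<dots> = (\<Sum>q<N. f (int q))"
    using sum.reindex_bij_betw[OF bij, of "\<lambda>q. f (int q)"] by simp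
  finally show ?thesis .
qed

text \<open>The two summands of \<open>x = x\<^sub>d + \<j> x\<^sub>c\<close>, kept inside \<open>quat\<close>.\<close>
definition dpart :: "quat \<Rightarrow> quat" where "dpart x = Quat (q0 x) (q1 x) 0 0"
definition cpart :: "quat \<Rightarrow> quat" where "cpart x = Quat 0 0 (q2 x) (q3 x)"

lemmas quat_ops_defs = zero_quat_def one_quat_def plus_quat_def times_quat_def dpart_def cpart_def

lemma of_cplx_quat_d: "of_cplx (quat_d x) = dpart x"
  by (simp add: of_cplx_def quat_d_def dpart_def)

lemma quat_j_of_cplx_quat_c: "quat_j * of_cplx (quat_c x) = cpart x"
  by (simp add: of_cplx_def quat_c_def quat_j_def quat_ops_defs)

lemma dpart_add_cpart: "dpart x + cpart x = x"
  by (simp add: quat_ops_defs)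

lemma quat_eqI: "dpart x = dpart y \<Longrightarrow> cpart x = cpart y \<Longrightarrow> x = y"
  by (metis dpart_add_cpart)

lemma dpart_add [simp]: "dpart (x + y) = dpart x + dpart y"
  and cpart_add [simp]: "cpart (x + y) = cpart x + cpart y"
  and dpart_0 [simp]: "dpart 0 = 0"
  and cpart_0 [simp]: "cpart 0 = 0"
  and dpart_1 [simp]: "dpart 1 = 1"
  and cpart_1 [simp]: "cpart 1 = 0"
  and dpart_dpart [simp]: "dpart (dpart x) = dpart x"
  and cpart_cpart [simp]: "cpart (cpart x) = cpart x"
  and dpart_cpart [simp]: "dpart (cpart x) = 0"
  and cpart_dpart [simp]: "cpart (dpart x) = 0"
  by (simp_all add: quat_ops_defs)

lemma dpart_mult: "dpart (x * y) = dpart x * dpart y + cpart x * cpart y"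
  and cpart_mult: "cpart (x * y) = dpart x * cpart y + cpart x * dpart y"
  by (simp_all add: quat_ops_defs)

lemma dpart_sum: "dpart (sum f S) = (\<Sum>x\<in>S. dpart (f x))"
  and cpart_sum: "cpart (sum f S) = (\<Sum>x\<in>S. cpart (f x))"
  by (induction S rule: infinite_finite_induct) auto

text \<open>Slices indexed cyclically by integers, so that indices mod \<open>n\<^sub>3\<close> can be added and
  subtracted freely.\<close>
definition slice_mod :: "nat \<Rightarrow> 'a list \<Rightarrow> int \<Rightarrow> 'a" where
  "slice_mod N A t = A ! nat (t mod int N)"

lemma slice_mod_mod [simp]: "slice_mod N A (t mod int N) = slice_mod N A t"
  by (simp add: slice_mod_def)

lemma slice_mod_cong: "t mod int N = u mod int N \<Longrightarrow> slice_mod N A t = slice_mod N A u"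
  by (simp add: slice_mod_def)

lemma slice_mod_of_nat [simp]: "q < N \<Longrightarrow> slice_mod N A (int q) = A ! q"
  by (simp add: slice_mod_def)

lemma nat_mod_int_less: "0 < N \<Longrightarrow> nat (t mod int N) < N"
  by (simp add: nat_less_iff)

lemma slice_mod_map:
  "length A = N \<Longrightarrow> 0 < N \<Longrightarrow> slice_mod N (map f A) t = f (slice_mod N A t)"
  by (simp add: slice_mod_def nat_mod_int_less)

lemma slice_mod_carrier:
  assumes "tensor_dim n1 n2 N A" "0 < N"
  shows "slice_mod N A t \<in> carrier_mat n1 n2"
proof -
  have "slice_mod N A t \<in> set A"
    using assms nat_mod_int_less[of N t] by (auto simp: tensor_dim_def slice_mod_def)
  then show ?thesis using assms(1) by (auto simp: tensor_dim_def)
qed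

lemma dim_bcirc [simp]: "dim_row (bcirc n1 n2 N C) = n1 * N" "dim_col (bcirc n1 n2 N C) = n2 * N"
  by (simp_all add: bcirc_def)

lemma bcirc_index:
  assumes "i < n1 * N" "j < n2 * N"
  shows "bcirc n1 n2 N C $$ (i, j) =
    slice_mod N C (int (i div n1) - int (j div n2)) $$ (i mod n1, j mod n2)"
proof -
  have r: "j div n2 < N" using assms(2) by (simp add: less_mult_imp_div_less mult.commute)
  have "int ((i div n1 + N - j div n2) mod N) = (int (i div n1) - int (j div n2) + int N) mod int N"
    using r by (simp add: zmod_int of_nat_diff algebra_simps)
  then have "(i div n1 + N - j div n2) mod N = nat ((int (i div n1) - int (j div n2)) mod int N)"
    by simp
  then show ?thesis using assms by (simp add: bcirc_def slice_mod_def)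
qed

lemma perm_P_index_sym:
  fixes q c N :: nat
  assumes "q < N" "c < N"
  shows "c = (N - q) mod N \<longleftrightarrow> q = (N - c) mod N"
  using assms by (cases "q = 0"; cases "c = 0") auto

lemma eq_block_index_iff:
  fixes l q b n :: nat
  assumes "b < n"
  shows "l = q * n + b \<longleftrightarrow> l div n = q \<and> l mod n = b"
proof
  assume "l div n = q \<and> l mod n = b"
  then show "l = q * n + b" using div_mult_mod_eq[of l n] by simp
qed (use assms in simp)

lemma kron_perm_P_one_index:
  assumes "l < N * n" "j < N * n"
  shows "kron (perm_P N) (1\<^sub>m n) $$ (l, j) =
    (if l = ((N - j div n) mod N) * n + j mod n then 1 else (0::'a::semiring_1))"
proof -
  have "0 < n" using assms by (cases n) auto
  then have lj: "l div n < N" "j div n < N" "l mod n < n" "j mod n < n"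
    using assms by (auto simp: less_mult_imp_div_less)
  have "l = ((N - j div n) mod N) * n + j mod n \<longleftrightarrow>
        l div n = (N - j div n) mod N \<and> l mod n = j mod n"
    using lj(4) by (rule eq_block_index_iff)
  then show ?thesis
    using assms lj perm_P_index_sym[of "l div n" N "j div n"]
    by (auto simp: kron_def perm_P_def)
qed

lemma dim_kron_perm_P_one [simp]:
  "dim_row (kron (perm_P N) (1\<^sub>m n)) = N * n" "dim_col (kron (perm_P N) (1\<^sub>m n)) = N * n"
  by (simp_all add: kron_def perm_P_def)

lemma mult_kron_perm_P_one_index:
  fixes M :: "'a::semiring_1 mat"
  assumes M: "dim_col M = n * N" "i < dim_row M" and j: "j < n * N"
  shows "(M * kron (perm_P N) (1\<^sub>m n)) $$ (i, j) = M $$ (i, ((N - j div n) mod N) * n + j mod n)"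
proof (rule mult_mat_unit_col_index)
  have "0 < n" using j by (cases n) auto
  then have "j div n < N" "j mod n < n"
    using j by (auto simp: less_mult_imp_div_less mult.commute)
  then show "((N - j div n) mod N) * n + j mod n < dim_row (kron (perm_P N) (1\<^sub>m n) :: 'a mat)"
    using block_index_less[of "(N - j div n) mod N" N "j mod n" n] by (simp add: mult.commute)
  show "(kron (perm_P N) (1\<^sub>m n) :: 'a mat) $$ (l, j) =
      (if l = ((N - j div n) mod N) * n + j mod n then 1 else 0)"
    if "l < dim_row (kron (perm_P N) (1\<^sub>m n) :: 'a mat)" for l
    by (rule kron_perm_P_one_index) (use that j in \<open>simp_all add: mult.commute\<close>)
qed (use M j in \<open>simp_all add: mult.commute\<close>)

lemma slice_mod_diff_mod [simp]: "slice_mod N A (x - t mod int N) = slice_mod N A (x - t)"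
  and slice_mod_add_mod [simp]: "slice_mod N A (x + t mod int N) = slice_mod N A (x + t)"
  and slice_mod_mod_diff [simp]: "slice_mod N A (t mod int N - x) = slice_mod N A (t - x)"
  and slice_mod_mod_add [simp]: "slice_mod N A (t mod int N + x) = slice_mod N A (t + x)"
  by (rule slice_mod_cong,
      simp add: mod_diff_right_eq mod_add_right_eq mod_diff_left_eq mod_add_left_eq)+

text \<open>Entry \<open>ab\<close> of block \<open>(p, r)\<close> of \<open>bcirc_z A\<close>; the \<open>\<j>\<close>-part comes from slice \<open>p + r\<close>
  because \<open>P\<^sub>n\<^sub>3\<close> reverses the block columns.\<close>
definition bcirc_z_entry :: "nat \<Rightarrow> quat mat list \<Rightarrow> int \<Rightarrow> int \<Rightarrow> nat \<times> nat \<Rightarrow> quat" where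
  "bcirc_z_entry N A p r ab =
     dpart (slice_mod N A (p - r) $$ ab) + cpart (slice_mod N A (p + r) $$ ab)"

lemma bcirc_z_carrier: "bcirc_z n1 n2 N A \<in> carrier_mat (n1 * N) (n2 * N)"
  by (rule carrier_matI) (simp_all add: bcirc_z_def mult.commute)

lemma bcirc_z_index:
  assumes A: "tensor_dim n1 n2 N A" and ij: "i < n1 * N" "j < n2 * N"
  shows "bcirc_z n1 n2 N A $$ (i, j) =
    bcirc_z_entry N A (int (i div n1)) (int (j div n2)) (i mod n1, j mod n2)"
proof -
  let ?p = "int (i div n1)" and ?r = "j div n2" and ?ab = "(i mod n1, j mod n2)"
  let ?q = "(N - ?r) mod N"
  have N: "0 < N" using ij by (cases N) auto
  have n: "0 < n1" "0 < n2" using ij by (auto intro: gr0I)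
  have r: "?r < N" using ij by (simp add: less_mult_imp_div_less mult.commute)
  have len: "length A = N" using A by (simp add: tensor_dim_def)
  have slice_index: "map_mat of_cplx (bcirc n1 n2 N (map (map_mat f) A)) $$ (i, l) =
      of_cplx (f (slice_mod N A (?p - int (l div n2)) $$ (i mod n1, l mod n2)))"
    if "l < n2 * N" for f l
    using that ij n slice_mod_carrier[OF A N, of "?p - int (l div n2)"]
    by (simp add: bcirc_index slice_mod_map[OF len N])
  have l: "?q * n2 + j mod n2 < n2 * N"
    using block_index_less[of ?q N "j mod n2" n2] n N by simp
  have "(map_mat of_cplx (bcirc n1 n2 N (tensor_c A)) * kron (perm_P N) (1\<^sub>m n2)) $$ (i, j)
      = map_mat of_cplx (bcirc n1 n2 N (tensor_c A)) $$ (i, ?q * n2 + j mod n2)"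
    by (rule mult_kron_perm_P_one_index) (use ij in simp_all)
  also have "\<dots> = of_cplx (quat_c (slice_mod N A (?p - int ?q) $$ ?ab))"
    using slice_index[OF l, of quat_c] n by (simp add: tensor_c_def)
  also have "slice_mod N A (?p - int ?q) = slice_mod N A (?p + int ?r)"
  proof (rule slice_mod_cong)
    have "int ?q = (int N - int ?r) mod int N" using r by (simp add: zmod_int of_nat_diff)
    then show "(?p - int ?q) mod int N = (?p + int ?r) mod int N"
      by (simp add: mod_diff_right_eq)
  qed
  finally have "(map_mat of_cplx (bcirc n1 n2 N (tensor_c A)) * kron (perm_P N) (1\<^sub>m n2)) $$ (i, j)
      = of_cplx (quat_c (slice_mod N A (?p + int ?r) $$ ?ab))" .
  moreover have "map_mat of_cplx (bcirc n1 n2 N (tensor_d A)) $$ (i, j)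
      = of_cplx (quat_d (slice_mod N A (?p - int ?r) $$ ?ab))"
    using slice_index[OF ij(2), of quat_d] by (simp add: tensor_d_def)
  moreover have "i < n1 * N" "j < N * n2" using ij by (simp_all add: mult.commute)
  ultimately show ?thesis
    by (simp add: bcirc_z_def bcirc_z_entry_def of_cplx_quat_d quat_j_of_cplx_quat_c
        del: index_mult_mat(1))
qed

lemma qt_prod_tensor_dim: "tensor_dim n1 n4 N (qt_prod n1 n2 n4 N A B)"
  by (auto simp: tensor_dim_def qt_prod_def fold_t_def)

lemma qt_prod_slice_mod_index:
  assumes A: "tensor_dim n1 n2 N A" and B: "tensor_dim n2 n4 N B" and N: "0 < N"
    and ab: "a < n1" "b < n4"
  shows "slice_mod N (qt_prod n1 n2 n4 N A B) t $$ (a, b) =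
    (\<Sum>q<N. \<Sum>m<n2. bcirc_z_entry N A t (int q) (a, m) * slice_mod N B (int q) $$ (m, b))"
proof -
  define s where "s = nat (t mod int N)"
  have s: "s < N" "int s = t mod int N" using N by (simp_all add: s_def nat_less_iff)
  have row: "s * n1 + a < n1 * N" using block_index_less[OF s(1) ab(1)] .
  have "slice_mod N (qt_prod n1 n2 n4 N A B) t $$ (a, b)
      = (bcirc_z n1 n2 N A * unfold_t n2 n4 N B) $$ (s * n1 + a, b)"
    using s ab by (simp add: slice_mod_def s_def qt_prod_def fold_t_def del: index_mult_mat(1))
  also have "\<dots> = (\<Sum>l<n2 * N. bcirc_z n1 n2 N A $$ (s * n1 + a, l) * unfold_t n2 n4 N B $$ (l, b))"
    using row ab bcirc_z_carrier[of n1 n2 N A] by (subst index_mult_mat_sum) (auto simp: unfold_t_def)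
  also have "\<dots> = (\<Sum>q<N. \<Sum>m<n2.
      bcirc_z n1 n2 N A $$ (s * n1 + a, q * n2 + m) * unfold_t n2 n4 N B $$ (q * n2 + m, b))"
    by (rule sum_lessThan_mult_blocks)
  also have "\<dots> = (\<Sum>q<N. \<Sum>m<n2.
      bcirc_z_entry N A t (int q) (a, m) * slice_mod N B (int q) $$ (m, b))"
  proof (intro sum.cong refl)
    fix q m assume q: "q \<in> {..<N}" and m: "m \<in> {..<n2}"
    have "q * n2 + m < n2 * N" using q m by (simp add: block_index_less)
    moreover have "bcirc_z_entry N A (int s) = bcirc_z_entry N A t"
      using s(2) by (simp add: bcirc_z_entry_def fun_eq_iff)
    ultimately show "bcirc_z n1 n2 N A $$ (s * n1 + a, q * n2 + m) *
        unfold_t n2 n4 N B $$ (q * n2 + m, b) = bcirc_z_entry N A t (int q) (a, m) * slice_mod N B (int q) $$ (m, b)"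
      using row q m ab by (simp add: bcirc_z_index[OF A] unfold_t_def)
  qed
  finally show ?thesis .
qed

lemma bcirc_z_entry_qt_prod:
  assumes A: "tensor_dim n1 n2 N A" and B: "tensor_dim n2 n4 N B" and N: "0 < N"
    and ab: "a < n1" "b < n4"
  shows "(\<Sum>q<N. \<Sum>m<n2. bcirc_z_entry N A p (int q) (a, m) * bcirc_z_entry N B (int q) r (m, b))
       = bcirc_z_entry N (qt_prod n1 n2 n4 N A B) p r (a, b)"
    (is "?lhs = ?rhs")
proof -
  let ?A = "\<lambda>t m. slice_mod N A t $$ (a, m)" and ?B = "\<lambda>t m. slice_mod N B t $$ (m, b)"
  define dd where "dd t = (\<Sum>m<n2. dpart (?A (p - r - t) m) * dpart (?B t m))" for t
  define cc where "cc t = (\<Sum>m<n2. cpart (?A (p - r + t) m) * cpart (?B t m))" for t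
  define dc where "dc t = (\<Sum>m<n2. dpart (?A (p + r - t) m) * cpart (?B t m))" for t
  define cd where "cd t = (\<Sum>m<n2. cpart (?A (p + r + t) m) * dpart (?B t m))" for t
  have periodic: "dd (t mod int N) = dd t" "cc (t mod int N) = cc t"
    "dc (t mod int N) = dc t" "cd (t mod int N) = cd t" for t
    by (simp_all add: dd_def cc_def dc_def cd_def)
  have "dpart ?lhs = (\<Sum>q<N. dd (int q + - r)) + (\<Sum>q<N. cc (int q + r))"
    unfolding dd_def cc_def bcirc_z_entry_def dpart_sum dpart_mult sum.distrib[symmetric]
    by (intro sum.cong refl) (simp add: algebra_simps)
  also have "\<dots> = (\<Sum>q<N. dd (int q)) + (\<Sum>q<N. cc (int q))"
    by (simp only: sum_shift_mod[of N dd, OF N periodic(1)]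
        sum_shift_mod[of N cc, OF N periodic(2)])
  also have "\<dots> =
      dpart (\<Sum>q<N. \<Sum>m<n2. bcirc_z_entry N A (p - r) (int q) (a, m) * ?B (int q) m)"
    unfolding dd_def cc_def bcirc_z_entry_def dpart_sum dpart_mult sum.distrib[symmetric]
    by (intro sum.cong refl) (simp add: algebra_simps)
  also have "\<dots> = dpart ?rhs"
    by (simp add: bcirc_z_entry_def qt_prod_slice_mod_index[OF A B N ab])
  finally have dpart_eq: "dpart ?lhs = dpart ?rhs" .
  have "cpart ?lhs = (\<Sum>q<N. dc (int q + r)) + (\<Sum>q<N. cd (int q + - r))"
    unfolding dc_def cd_def bcirc_z_entry_def cpart_sum cpart_mult sum.distrib[symmetric]
    by (intro sum.cong refl) (simp add: algebra_simps)
  also have "\<dots> = (\<Sum>q<N. dc (int q)) + (\<Sum>q<N. cd (int q))"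
    by (simp only: sum_shift_mod[of N dc, OF N periodic(3)]
        sum_shift_mod[of N cd, OF N periodic(4)])
  also have "\<dots> =
      cpart (\<Sum>q<N. \<Sum>m<n2. bcirc_z_entry N A (p + r) (int q) (a, m) * ?B (int q) m)"
    unfolding dc_def cd_def bcirc_z_entry_def cpart_sum cpart_mult sum.distrib[symmetric]
    by (intro sum.cong refl) (simp add: algebra_simps)
  also have "\<dots> = cpart ?rhs"
    by (simp add: bcirc_z_entry_def qt_prod_slice_mod_index[OF A B N ab])
  finally show ?thesis by (rule quat_eqI[OF dpart_eq])
qed

lemma bcirc_z_qt_prod:
  assumes A: "tensor_dim n1 n2 N A" and B: "tensor_dim n2 n4 N B" and N: "0 < N"
  shows "bcirc_z n1 n4 N (qt_prod n1 n2 n4 N A B) = bcirc_z n1 n2 N A * bcirc_z n2 n4 N B"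
proof (rule eq_matI)
  fix i j assume "i < dim_row (bcirc_z n1 n2 N A * bcirc_z n2 n4 N B)"
    "j < dim_col (bcirc_z n1 n2 N A * bcirc_z n2 n4 N B)"
  then have ij: "i < n1 * N" "j < n4 * N"
    using bcirc_z_carrier[of n1 n2 N A] bcirc_z_carrier[of n2 n4 N B]
    by (simp_all add: carrier_matD)
  have "0 < n1" "0 < n4" using ij by (auto intro: gr0I)
  then have ab: "i mod n1 < n1" "j mod n4 < n4" by simp_all
  have "(bcirc_z n1 n2 N A * bcirc_z n2 n4 N B) $$ (i, j)
      = (\<Sum>l<n2 * N. bcirc_z n1 n2 N A $$ (i, l) * bcirc_z n2 n4 N B $$ (l, j))"
    using ij bcirc_z_carrier[of n1 n2 N A] bcirc_z_carrier[of n2 n4 N B]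
    by (subst index_mult_mat_sum) (simp_all add: carrier_matD)
  also have "\<dots> = (\<Sum>q<N. \<Sum>m<n2.
      bcirc_z n1 n2 N A $$ (i, q * n2 + m) * bcirc_z n2 n4 N B $$ (q * n2 + m, j))"
    by (rule sum_lessThan_mult_blocks)
  also have "\<dots> = (\<Sum>q<N. \<Sum>m<n2. bcirc_z_entry N A (int (i div n1)) (int q) (i mod n1, m) *
      bcirc_z_entry N B (int q) (int (j div n4)) (m, j mod n4))"
    using ij by (intro sum.cong refl)
      (simp add: bcirc_z_index[OF A] bcirc_z_index[OF B] block_index_less)
  also have "\<dots> = bcirc_z n1 n4 N (qt_prod n1 n2 n4 N A B) $$ (i, j)"
    using ij ab by (simp add: bcirc_z_entry_qt_prod[OF A B N] bcirc_z_index[OF qt_prod_tensor_dim])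
  finally show "bcirc_z n1 n4 N (qt_prod n1 n2 n4 N A B) $$ (i, j) =
      (bcirc_z n1 n2 N A * bcirc_z n2 n4 N B) $$ (i, j)" by simp
qed (use bcirc_z_carrier[of n1 n2 N A] bcirc_z_carrier[of n2 n4 N B]
      bcirc_z_carrier[of n1 n4 N "qt_prod n1 n2 n4 N A B"] in \<open>simp_all add: carrier_matD\<close>)

lemma int_diff_mod_eq_0_iff:
  fixes p r N :: nat
  assumes "p < N" "r < N"
  shows "(int p - int r) mod int N = 0 \<longleftrightarrow> p = r"
proof -
  have "(int p - int r) mod int N = 0 \<longleftrightarrow> int p mod int N = int r mod int N"
    by (simp add: mod_eq_dvd_iff dvd_eq_mod_eq_0)
  also have "\<dots> \<longleftrightarrow> p = r" using assms by (simp flip: zmod_int)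
  finally show ?thesis .
qed

lemma slice_mod_qt_id:
  assumes "0 < N"
  shows "slice_mod N (qt_id n N) t = (if t mod int N = 0 then 1\<^sub>m n else 0\<^sub>m n n)"
proof -
  have "0 \<le> t mod int N" "nat (t mod int N) < N" using assms by (simp_all add: nat_less_iff)
  then have "nat (t mod int N) = 0 \<longleftrightarrow> t mod int N = 0" by (simp add: nat_eq_iff)
  with \<open>nat (t mod int N) < N\<close> show ?thesis by (simp add: slice_mod_def qt_id_def)
qed

lemma qt_id_tensor_dim: "tensor_dim n n N (qt_id n N)"
  by (auto simp: tensor_dim_def qt_id_def)

lemma bcirc_z_qt_id:
  assumes N: "0 < N"
  shows "bcirc_z n n N (qt_id n N) = 1\<^sub>m (n * N)"
proof (rule eq_matI)
  fix i j assume "i < dim_row (1\<^sub>m (n * N) :: quat mat)" "j < dim_col (1\<^sub>m (n * N) :: quat mat)"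
  then have ij: "i < n * N" "j < n * N" by simp_all
  moreover have "0 < n" using ij by (auto intro: gr0I)
  ultimately have "i div n < N" "j div n < N" "i mod n < n" "j mod n < n"
    by (simp_all add: less_mult_imp_div_less mult.commute)
  moreover have "i = j \<longleftrightarrow> i div n = j div n \<and> i mod n = j mod n"
    by (metis div_mult_mod_eq)
  ultimately show "bcirc_z n n N (qt_id n N) $$ (i, j) = 1\<^sub>m (n * N) $$ (i, j)"
    using ij N by (simp add: bcirc_z_index[OF qt_id_tensor_dim] bcirc_z_entry_def slice_mod_qt_id
        int_diff_mod_eq_0_iff)
qed (use bcirc_z_carrier[of n n N "qt_id n N"] in \<open>simp_all add: carrier_matD\<close>)

lemma qt_prod_qt_id_right:
  assumes B: "tensor_dim n1 n2 N B" and N: "0 < N"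
  shows "qt_prod n1 n2 n2 N B (qt_id n2 N) = B"
proof (rule nth_equalityI)
  have prod: "tensor_dim n1 n2 N (qt_prod n1 n2 n2 N B (qt_id n2 N))"
    by (rule qt_prod_tensor_dim)
  then show len: "length (qt_prod n1 n2 n2 N B (qt_id n2 N)) = length B"
    using B by (simp add: tensor_dim_def)
  fix s assume "s < length (qt_prod n1 n2 n2 N B (qt_id n2 N))"
  then have s: "s < N" using len B by (simp add: tensor_dim_def)
  have carriers: "qt_prod n1 n2 n2 N B (qt_id n2 N) ! s \<in> carrier_mat n1 n2"
    "B ! s \<in> carrier_mat n1 n2"
    using s B prod by (auto simp: tensor_dim_def)
  show "qt_prod n1 n2 n2 N B (qt_id n2 N) ! s = B ! s"
  proof (rule eq_matI)
    fix a b assume "a < dim_row (B ! s)" "b < dim_col (B ! s)"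
    then have ab: "a < n1" "b < n2" using carriers by auto
    have "qt_prod n1 n2 n2 N B (qt_id n2 N) ! s $$ (a, b)
        = slice_mod N (qt_prod n1 n2 n2 N B (qt_id n2 N)) (int s) $$ (a, b)"
      using s by simp
    also have "\<dots> = (\<Sum>q<N. \<Sum>m<n2. bcirc_z_entry N B (int s) (int q) (a, m) *
        slice_mod N (qt_id n2 N) (int q) $$ (m, b))"
      by (rule qt_prod_slice_mod_index[OF B qt_id_tensor_dim N ab])
    also have "\<dots> = (\<Sum>q<N. if q = 0 then bcirc_z_entry N B (int s) 0 (a, b) else 0)"
      using ab by (intro sum.cong refl)
        (simp add: slice_mod_qt_id[OF N] if_distrib[of "(*) _"] cong: if_cong)
    also have "\<dots> = bcirc_z_entry N B (int s) 0 (a, b)"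
      using N by simp
    also have "\<dots> = B ! s $$ (a, b)"
      using s by (simp add: bcirc_z_entry_def dpart_add_cpart)
    finally show "qt_prod n1 n2 n2 N B (qt_id n2 N) ! s $$ (a, b) = B ! s $$ (a, b)" .
  qed (use carriers in auto)
qed

lemma bcirc_z_inj:
  assumes B: "tensor_dim n1 n2 N B" and B': "tensor_dim n1 n2 N B'" and N: "0 < N"
    and eq: "bcirc_z n1 n2 N B = bcirc_z n1 n2 N B'"
  shows "B = B'"
proof -
  have "B = qt_prod n1 n2 n2 N B (qt_id n2 N)" using qt_prod_qt_id_right[OF B N] ..
  also have "\<dots> = qt_prod n1 n2 n2 N B' (qt_id n2 N)" unfolding qt_prod_def eq ..
  also have "\<dots> = B'" using qt_prod_qt_id_right[OF B' N] .
  finally show ?thesis .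
qed

lemma bcirc_z_mult_eq_one:
  assumes X: "tensor_dim n1 n2 N X" and Y: "tensor_dim n2 n1 N Y" and N: "0 < N"
    and XY: "qt_prod n1 n2 n1 N X Y = qt_id n1 N"
  shows "bcirc_z n1 n2 N X * bcirc_z n2 n1 N Y = 1\<^sub>m (n1 * N)"
proof -
  have "bcirc_z n1 n2 N X * bcirc_z n2 n1 N Y = bcirc_z n1 n1 N (qt_prod n1 n2 n1 N X Y)"
    by (rule bcirc_z_qt_prod[OF X Y N, symmetric])
  also have "\<dots> = 1\<^sub>m (n1 * N)" unfolding XY by (rule bcirc_z_qt_id[OF N])
  finally show ?thesis .
qed

lemma qt_is_inverse_inverts_mat:
  assumes A: "tensor_dim n n N A" and N: "0 < N" and inv: "qt_is_inverse n N A B"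
  shows "inverts_mat (bcirc_z n n N A) (bcirc_z n n N B)"
    and "inverts_mat (bcirc_z n n N B) (bcirc_z n n N A)"
proof -
  have B: "tensor_dim n n N B" using inv by (simp add: qt_is_inverse_def)
  show "inverts_mat (bcirc_z n n N A) (bcirc_z n n N B)"
    unfolding inverts_mat_def carrier_matD(1)[OF bcirc_z_carrier]
    by (rule bcirc_z_mult_eq_one[OF A B N]) (use inv in \<open>simp add: qt_is_inverse_def\<close>)
  show "inverts_mat (bcirc_z n n N B) (bcirc_z n n N A)"
    unfolding inverts_mat_def carrier_matD(1)[OF bcirc_z_carrier]
    by (rule bcirc_z_mult_eq_one[OF B A N]) (use inv in \<open>simp add: qt_is_inverse_def\<close>)
qed

lemma qt_inv_eq:
  assumes A: "tensor_dim n n N A" and N: "0 < N" and inv: "qt_is_inverse n N A B"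
  shows "qt_inv n N A = B"
  unfolding qt_inv_def
proof (rule the_equality)
  fix B' assume inv': "qt_is_inverse n N A B'"
  have B: "tensor_dim n n N B" and B': "tensor_dim n n N B'"
    using inv inv' by (simp_all add: qt_is_inverse_def)
  let ?A = "bcirc_z n n N A" and ?B = "bcirc_z n n N B" and ?B' = "bcirc_z n n N B'"
  have "?B' = ?B' * (?A * ?B)"
    using bcirc_z_mult_eq_one[OF A B N] inv right_mult_one_mat[OF bcirc_z_carrier]
    by (simp add: qt_is_inverse_def)
  also have "\<dots> = (?B' * ?A) * ?B"
    by (rule assoc_mult_mat[OF bcirc_z_carrier bcirc_z_carrier bcirc_z_carrier, symmetric])
  also have "\<dots> = ?B"
    using bcirc_z_mult_eq_one[OF B' A N] inv' left_mult_one_mat[OF bcirc_z_carrier]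
    by (simp add: qt_is_inverse_def)
  finally show "B' = B" by (rule bcirc_z_inj[OF B' B N])
qed (fact inv)

lemma qt_pow_tensor_dim: "tensor_dim n n N A \<Longrightarrow> tensor_dim n n N (qt_pow n N A k)"
  by (induction n N A k rule: qt_pow.induct) (simp_all add: qt_id_tensor_dim qt_prod_tensor_dim)

lemma pow_mat_Suc_left:
  assumes "A \<in> carrier_mat n n"
  shows "A ^\<^sub>m Suc k = A * A ^\<^sub>m k"
proof (induction k)
  case (Suc k)
  have "A ^\<^sub>m Suc (Suc k) = A * A ^\<^sub>m k * A" using Suc by simp
  also have "\<dots> = A * A ^\<^sub>m Suc k" using assms by (simp add: assoc_mult_mat[of _ n n _ n _ n])
  finally show ?case .
qed (use assms in simp)

lemma bcirc_z_qt_pow: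
  assumes A: "tensor_dim n n N A" and N: "0 < N"
  shows "bcirc_z n n N (qt_pow n N A (Suc k)) = bcirc_z n n N A ^\<^sub>m Suc k"
proof (induction k)
  case (Suc k)
  have "bcirc_z n n N (qt_pow n N A (Suc (Suc k))) =
      bcirc_z n n N A * bcirc_z n n N (qt_pow n N A (Suc k))"
    using bcirc_z_qt_prod[OF A qt_pow_tensor_dim[OF A] N] by simp
  also have "\<dots> = bcirc_z n n N A * bcirc_z n n N A ^\<^sub>m Suc k" by (simp only: Suc)
  also have "\<dots> = bcirc_z n n N A ^\<^sub>m Suc (Suc k)"
    by (rule pow_mat_Suc_left[OF bcirc_z_carrier, symmetric])
  finally show ?case .
qed (use bcirc_z_carrier[of n n N A] in simp)

theorem lemma3p4:
  fixes n n3 :: nat and A :: "quat mat list"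
  assumes "0 < n" and "0 < n3"
    and "tensor_dim n n n3 A"
  shows "(\<forall>k::nat. 1 \<le> k \<longrightarrow> bcirc_z n n n3 (qt_pow n n3 A k) = bcirc_z n n n3 A ^\<^sub>m k) \<and>
         (qt_invertible n n3 A \<longrightarrow>
           inverts_mat (bcirc_z n n n3 A) (bcirc_z n n n3 (qt_inv n n3 A)) \<and>
           inverts_mat (bcirc_z n n n3 (qt_inv n n3 A)) (bcirc_z n n n3 A))"
proof (intro conjI allI impI)
  fix k :: nat assume "1 \<le> k"
  then obtain k' where "k = Suc k'" by (cases k) auto
  then show "bcirc_z n n n3 (qt_pow n n3 A k) = bcirc_z n n n3 A ^\<^sub>m k"
    using bcirc_z_qt_pow[OF assms(3,2)] by simp
next
  assume "qt_invertible n n3 A"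
  then obtain B where B: "qt_is_inverse n n3 A B" by (auto simp: qt_invertible_def)
  then have "qt_inv n n3 A = B" by (rule qt_inv_eq[OF assms(3,2)])
  then show "inverts_mat (bcirc_z n n n3 A) (bcirc_z n n n3 (qt_inv n n3 A))"
    and "inverts_mat (bcirc_z n n n3 (qt_inv n n3 A)) (bcirc_z n n n3 A)"
    using qt_is_inverse_inverts_mat[OF assms(3,2) B] by simp_all
qed

end
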